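(* In the group-based tree model described in the context (with arbitrary real edge parameters), let $e$ be an internal edge of $\mathscr{T}$ with endpoints $\nu$ and $\nu'$. Choose leaves $i,j$ such that the path between $i$ and $j$ contains $\nu$ but not $\nu'$, and leaves $i',j'$ such that the path between $i'$ and $j'$ contains $\nu'$ but not $\nu$. For $a,b,c,d\in G$ let $z(a,b,c,d)\in G^m$ assign $a,b,c,d$ to leaves $i,j,i',j'$ respectively and $0$ to all other leaves. Then for every $h\in G$ the denominator below is nonzero and $$\big[\check f^{(e)}(h)\big]^2=\frac{q_{z(h,0,-h,0)}\;q_{z(0,-h,0,h)}}{q_{z(h,-h,0,0)}\;q_{z(0,0,-h,h)}}.$$
   Context: Group-based model on a tree. $G$ is a finite abelian group written additively with identity $0$; fix $G\cong\prod_k\mathbb{Z}_{n_k}$ and for $g,h\in G$ put $\hat g(h)=\prod_k\exp(2\pi i\,g_kh_k/n_k)$. The Fourier transform of $a:G\to\mathbb{C}$ is $\check a(g)=\sum_{h\in G}\hat g(h)a(h)$. $\mathscr{T}$ is a finite tree with $m$ leaves, one of which is designated the root leaf $r$. Each edge $e$ carries a function $\psi^{(e)}:G\to\mathbb{R}$ with $\sum_g\psi^{(e)}(g)=0$ and $\psi^{(e)}(g)=\psi^{(e)}(-g)$ (its values at $g\ne0$ are the edge parameters of $e$); put $Q^{(e)}_{g,h}=\psi^{(e)}(h-g)$, $P^{(e)}=\exp(Q^{(e)})$, $f^{(e)}(h)=P^{(e)}_{0,h}$, so $P^{(e)}_{g,h}=f^{(e)}(h-g)$. Edges are directed away from $r$.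 For $\mathbf g\in G^{m}$ (indexed by all leaves, $r$ included), $p_{\mathbf g}=\sum_\sigma\prod_{e=(u\to v)}P^{(e)}_{\sigma(u),\sigma(v)}$, the sum over all maps $\sigma$ from vertices to $G$ with $\sigma(r)=0$ and $\sigma$ equal to $\mathbf g$ on the leaves. The Fourier transform is $q_{\mathbf g}=\sum_{\mathbf h\in G^m}\prod_{x}\hat g_x(h_x)\,p_{\mathbf h}$. For an edge $e$, $\Lambda(e)$ is the set of leaves whose path to $r$ contains $e$, and ${}^*g_e=\sum_{x\in\Lambda(e)}g_x$. It is a known fact (Hendy; Evans–Speed) that $q_{\mathbf g}=\prod_{e}\check f^{(e)}({}^*g_e)$ for all $\mathbf g\in G^m$. An internal edge is one neither of whose endpoints is a leaf. *)

theory Defs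
  imports Complex_Main
begin

text \<open>Concrete model of Z_{n_0} x ... x Z_{n_{K-1}}: integer vectors indexed by k<K
  with 0 <= x k < n k, and x k = 0 for k >= K.\<close>
definition Zprod :: "nat \<Rightarrow> (nat \<Rightarrow> nat) \<Rightarrow> (nat \<Rightarrow> int) set" where
  "Zprod K n = {x. (\<forall>k<K. 0 \<le> x k \<and> x k < int (n k)) \<and> (\<forall>k\<ge>K. x k = 0)}"

definition cyclic_decomp :: "nat \<Rightarrow> (nat \<Rightarrow> nat) \<Rightarrow> ('g::ab_group_add \<Rightarrow> nat \<Rightarrow> int) \<Rightarrow> bool" where
  "cyclic_decomp K n phi \<longleftrightarrow> (\<forall>k<K. 1 \<le> n k) \<and> bij_betw phi UNIV (Zprod K n) \<and>
     (\<forall>a b. \<forall>k<K. phi (a + b) k = (phi a k + phi b k) mod int (n k))"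

definition gchar :: "nat \<Rightarrow> (nat \<Rightarrow> nat) \<Rightarrow> ('g \<Rightarrow> nat \<Rightarrow> int) \<Rightarrow> 'g \<Rightarrow> 'g \<Rightarrow> complex" where
  "gchar K n phi g h = (\<Prod>k<K. cis (2 * pi * real_of_int (phi g k * phi h k) / real (n k)))"

definition fourier :: "nat \<Rightarrow> (nat \<Rightarrow> nat) \<Rightarrow> ('g::finite \<Rightarrow> nat \<Rightarrow> int) \<Rightarrow> ('g \<Rightarrow> real) \<Rightarrow> 'g \<Rightarrow> complex" where
  "fourier K n phi a g = (\<Sum>h\<in>UNIV. gchar K n phi g h * complex_of_real (a h))"

definition mat_mult :: "('g::finite \<Rightarrow> 'g \<Rightarrow> real) \<Rightarrow> ('g \<Rightarrow> 'g \<Rightarrow> real) \<Rightarrow> 'g \<Rightarrow> 'g \<Rightarrow> real" where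
  "mat_mult A B g h = (\<Sum>k\<in>UNIV. A g k * B k h)"

fun mat_pow :: "('g::finite \<Rightarrow> 'g \<Rightarrow> real) \<Rightarrow> nat \<Rightarrow> 'g \<Rightarrow> 'g \<Rightarrow> real" where
  "mat_pow A 0 = (\<lambda>g h. if g = h then 1 else 0)"
| "mat_pow A (Suc j) = mat_mult (mat_pow A j) A"

definition mat_exp :: "('g::finite \<Rightarrow> 'g \<Rightarrow> real) \<Rightarrow> 'g \<Rightarrow> 'g \<Rightarrow> real" where
  "mat_exp A g h = (\<Sum>j. mat_pow A j g h / fact j)"

definition Qmat :: "('g::ab_group_add \<Rightarrow> real) \<Rightarrow> 'g \<Rightarrow> 'g \<Rightarrow> real" where
  "Qmat psi g h = psi (h - g)"

definition Pmat :: "('g::{finite,ab_group_add} \<Rightarrow> real) \<Rightarrow> 'g \<Rightarrow> 'g \<Rightarrow> real" where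
  "Pmat psi = mat_exp (Qmat psi)"

definition fvec :: "('g::{finite,ab_group_add} \<Rightarrow> real) \<Rightarrow> 'g \<Rightarrow> real" where
  "fvec psi h = Pmat psi 0 h"

text \<open>A finite tree with vertex set V given by a set D of directed edges, directed away
  from the vertex r: every vertex other than r has exactly one incoming edge, r has none,
  and every vertex is reachable from r.\<close>
definition tree_directed_from :: "'v set \<Rightarrow> ('v \<times> 'v) set \<Rightarrow> 'v \<Rightarrow> bool" where
  "tree_directed_from V D r \<longleftrightarrow> finite V \<and> D \<subseteq> V \<times> V \<and> r \<in> V \<and>
     (\<forall>u. (u, r) \<notin> D) \<and> (\<forall>v\<in>V. v \<noteq> r \<longrightarrow> (\<exists>!u. (u, v) \<in> D)) \<and>
     (\<forall>v\<in>V. (r, v) \<in> D\<^sup>*)"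

definition adj :: "('v \<times> 'v) set \<Rightarrow> 'v \<Rightarrow> 'v \<Rightarrow> bool" where
  "adj D u v \<longleftrightarrow> (u, v) \<in> D \<or> (v, u) \<in> D"

definition leaves :: "'v set \<Rightarrow> ('v \<times> 'v) set \<Rightarrow> 'v set" where
  "leaves V D = {v \<in> V. card {w. adj D v w} = 1}"

definition internal_edge :: "'v set \<Rightarrow> ('v \<times> 'v) set \<Rightarrow> 'v \<times> 'v \<Rightarrow> bool" where
  "internal_edge V D e \<longleftrightarrow> e \<in> D \<and> fst e \<notin> leaves V D \<and> snd e \<notin> leaves V D"

definition tpath :: "('v \<times> 'v) set \<Rightarrow> 'v \<Rightarrow> 'v \<Rightarrow> 'v list \<Rightarrow> bool" where
  "tpath D x y xs \<longleftrightarrow> xs \<noteq> [] \<and> hd xs = x \<and> last xs = y \<and> distinct xs \<and>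
     (\<forall>k. Suc k < length xs \<longrightarrow> adj D (xs ! k) (xs ! Suc k))"

definition on_path :: "('v \<times> 'v) set \<Rightarrow> 'v \<Rightarrow> 'v \<Rightarrow> 'v \<Rightarrow> bool" where
  "on_path D x y w \<longleftrightarrow> (\<exists>xs. tpath D x y xs \<and> w \<in> set xs)"

text \<open>Elements of G^m (indexed by the leaves L) are functions that vanish off L.\<close>
definition leaf_cfgs :: "'v set \<Rightarrow> ('v \<Rightarrow> 'g::zero) set" where
  "leaf_cfgs L = {g. \<forall>x. x \<notin> L \<longrightarrow> g x = 0}"

definition pprob :: "'v set \<Rightarrow> ('v \<times> 'v) set \<Rightarrow> 'v \<Rightarrow> ('v \<times> 'v \<Rightarrow> 'g::{finite,ab_group_add} \<Rightarrow> real)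
     \<Rightarrow> ('v \<Rightarrow> 'g) \<Rightarrow> real" where
  "pprob V D r psi g = (\<Sum>\<sigma>\<in>{\<sigma>. (\<forall>x. x \<notin> V \<longrightarrow> \<sigma> x = 0) \<and> \<sigma> r = 0 \<and>
        (\<forall>x\<in>leaves V D. \<sigma> x = g x)}.
      \<Prod>e\<in>D. Pmat (psi e) (\<sigma> (fst e)) (\<sigma> (snd e)))"

definition qfour :: "nat \<Rightarrow> (nat \<Rightarrow> nat) \<Rightarrow> ('g::{finite,ab_group_add} \<Rightarrow> nat \<Rightarrow> int) \<Rightarrow>
     'v set \<Rightarrow> ('v \<times> 'v) set \<Rightarrow> 'v \<Rightarrow> ('v \<times> 'v \<Rightarrow> 'g \<Rightarrow> real) \<Rightarrow> ('v \<Rightarrow> 'g) \<Rightarrow> complex" where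
  "qfour K n phi V D r psi g = (\<Sum>h\<in>leaf_cfgs (leaves V D).
      (\<Prod>x\<in>leaves V D. gchar K n phi (g x) (h x)) * complex_of_real (pprob V D r psi h))"

definition zcfg :: "'v \<Rightarrow> 'v \<Rightarrow> 'v \<Rightarrow> 'v \<Rightarrow> 'g::zero \<Rightarrow> 'g \<Rightarrow> 'g \<Rightarrow> 'g \<Rightarrow> 'v \<Rightarrow> 'g" where
  "zcfg i j i' j' a b c d = (\<lambda>x. if x = i then a else if x = j then b else
      if x = i' then c else if x = j' then d else 0)"

end

(*
  By the formula of Hendy and Evans-Speed, q_g is the product over the edges d of the Fourier
  transform of f^(d) at the sum of g over the leaves below d. The formula holds because a
  labeling vanishing at the root is determined by its increments along the edges, which range
  freely over G^D, so that the sum over labelings factorises over the edges. The Fourier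
  transform of f^(d) is the exponential of that of psi^(d), since the characters are
  eigenvectors of the circulant matrix Q^(d); hence it never vanishes, equals 1 at 0 and is even.

  For the four configurations z of the statement, the edge d contributes its factor at the sum
  of the values of z at those of i, j, i', j' that lie below d. Since the two paths lie on
  opposite sides of e, no edge separates both pairs {i,j} and {i',j'}. An edge separating exactly
  one pair contributes the same factor to the numerator and to the denominator, and an edge
  separating neither pair contributes 1, unless it is e, the only edge separating {i,j} from
  {i',j'}, which contributes the square of its factor at h to the numerator.
*)
theory Submission
  imports Defs "HOL-Library.FuncSet"
begin

section \<open>Characters of G\<close>

lemma cis_mod_mult:
  fixes x y z :: int and N :: nat
  assumes "N > 0"
  shows "cis (2 * pi * of_int (((x + y) mod int N) * z) / N) =
         cis (2 * pi * of_int (x * z) / N) * cis (2 * pi * of_int (y * z) / N)"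
proof -
  define q where "q = (x + y) div int N"
  have mod_eq: "(x + y) mod int N = x + y - int N * q"
    unfolding q_def by (simp add: minus_div_mult_eq_mod[symmetric])
  have "2 * pi * of_int (((x + y) mod int N) * z) / N
      = 2 * pi * of_int (x * z) / N + 2 * pi * of_int (y * z) / N + 2 * pi * of_int (- (q * z))"
    using assms unfolding mod_eq by (simp add: field_simps)
  then have "cis (2 * pi * of_int (((x + y) mod int N) * z) / N)
      = cis (2 * pi * of_int (x * z) / N) * cis (2 * pi * of_int (y * z) / N)
        * cis (2 * pi * of_int (- (q * z)))"
    by (simp add: cis_mult)
  also have "cis (2 * pi * of_int (- (q * z))) = 1"
    by (rule cis_multiple_2pi) simp
  finally show ?thesis by simp
qed

lemma gchar_commute: "gchar K n phi g h = gchar K n phi h g"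
  unfolding gchar_def by (simp add: mult.commute)

lemma gchar_nonzero: "gchar K n phi g h \<noteq> 0"
  unfolding gchar_def by (simp add: cis_neq_zero)

lemma sum_UNIV_add_shift:
  fixes F :: "'g::{finite,ab_group_add} \<Rightarrow> 'a::comm_monoid_add"
  shows "(\<Sum>k\<in>UNIV. F (k + c)) = (\<Sum>k\<in>UNIV. F k)"
  by (rule sum.reindex_bij_witness[of _ "\<lambda>k. k - c" "\<lambda>k. k + c"]) auto

lemma sum_UNIV_uminus:
  fixes F :: "'g::{finite,ab_group_add} \<Rightarrow> 'a::comm_monoid_add"
  shows "(\<Sum>k\<in>UNIV. F (- k)) = (\<Sum>k\<in>UNIV. F k)"
  by (rule sum.reindex_bij_witness[of _ uminus uminus]) auto

context
  fixes K :: nat and n :: "nat \<Rightarrow> nat" and phi :: "'g::ab_group_add \<Rightarrow> nat \<Rightarrow> int"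
  assumes decomp: "cyclic_decomp K n phi"
begin

lemma gchar_add_left: "gchar K n phi (a + b) t = gchar K n phi a t * gchar K n phi b t"
  unfolding gchar_def prod.distrib[symmetric]
proof (rule prod.cong[OF refl])
  fix k assume "k \<in> {..<K}"
  then have "n k > 0" "phi (a + b) k = (phi a k + phi b k) mod int (n k)"
    using decomp unfolding cyclic_decomp_def by auto
  then show "cis (2 * pi * of_int (phi (a + b) k * phi t k) / n k) =
      cis (2 * pi * of_int (phi a k * phi t k) / n k) *
      cis (2 * pi * of_int (phi b k * phi t k) / n k)"
    using cis_mod_mult by simp
qed

lemma gchar_add_right: "gchar K n phi t (a + b) = gchar K n phi t a * gchar K n phi t b"
  using gchar_add_left[of a b t] by (simp only: gchar_commute[of K n phi t])

lemma gchar_zero_left: "gchar K n phi 0 t = 1"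
proof -
  have "gchar K n phi 0 t = gchar K n phi 0 t * gchar K n phi 0 t"
    using gchar_add_left[of 0 0 t] by simp
  then show ?thesis using gchar_nonzero[of K n phi 0 t] by (metis mult_cancel_left1)
qed

lemma gchar_zero_right: "gchar K n phi t 0 = 1"
  using gchar_zero_left[of t] by (simp only: gchar_commute[of K n phi t])

lemma gchar_uminus_left: "gchar K n phi (- g) t = gchar K n phi g (- t)"
proof -
  have "gchar K n phi (- g) t * gchar K n phi g t = 1"
    using gchar_add_left[of "- g" g t] by (simp add: gchar_zero_left)
  moreover have "gchar K n phi g (- t) * gchar K n phi g t = 1"
    using gchar_add_right[of g "- t" t] by (simp add: gchar_zero_right)
  ultimately show ?thesis using gchar_nonzero[of K n phi g t] by (metis mult_cancel_right)
qed

lemma gchar_sum_left: "gchar K n phi (\<Sum>x\<in>X. a x) t = (\<Prod>x\<in>X. gchar K n phi (a x) t)"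
  by (induction X rule: infinite_finite_induct) (simp_all add: gchar_zero_left gchar_add_left)

lemma gchar_sum_right: "gchar K n phi t (\<Sum>x\<in>X. a x) = (\<Prod>x\<in>X. gchar K n phi t (a x))"
  using gchar_sum_left[of a X t] by (simp only: gchar_commute[of K n phi t])

end

section \<open>Circulant rate matrices and their exponentials\<close>

lemma Qmat_translate: "Qmat psi (a + c) (b + c) = Qmat psi a b"
  by (simp add: Qmat_def)

lemma mat_pow_Qmat_translate:
  fixes psi :: "'g::{finite,ab_group_add} \<Rightarrow> real"
  shows "mat_pow (Qmat psi) j (a + c) (b + c) = mat_pow (Qmat psi) j a b"
proof (induction j arbitrary: b)
  case 0
  then show ?case by simp
next
  case (Suc j)
  have "mat_pow (Qmat psi) (Suc j) (a + c) (b + c)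
      = (\<Sum>k\<in>UNIV. mat_pow (Qmat psi) j (a + c) (k + c) * Qmat psi (k + c) (b + c))"
    unfolding mat_pow.simps mat_mult_def by (rule sum_UNIV_add_shift[symmetric])
  also have "\<dots> = mat_pow (Qmat psi) (Suc j) a b"
    by (simp only: mat_pow.simps mat_mult_def Suc.IH Qmat_translate)
  finally show ?case .
qed

lemma Pmat_eq_fvec_diff: "Pmat psi a b = fvec psi (b - a)"
  using mat_pow_Qmat_translate[of psi _ 0 a "b - a"]
  by (simp add: fvec_def Pmat_def mat_exp_def)

lemma mat_pow_abs_le:
  fixes A :: "'g::finite \<Rightarrow> 'g \<Rightarrow> real"
  shows "\<bar>mat_pow A j g h\<bar> \<le> (\<Sum>k\<in>UNIV. \<Sum>l\<in>UNIV. \<bar>A k l\<bar>) ^ j"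
proof (induction j arbitrary: h)
  case 0
  then show ?case by simp
next
  case (Suc j)
  define C where "C = (\<Sum>k\<in>UNIV. \<Sum>l\<in>UNIV. \<bar>A k l\<bar>)"
  have "C \<ge> 0" unfolding C_def by (intro sum_nonneg) auto
  have "\<bar>mat_pow A (Suc j) g h\<bar> \<le> (\<Sum>k\<in>UNIV. \<bar>mat_pow A j g k\<bar> * \<bar>A k h\<bar>)"
    unfolding mat_pow.simps mat_mult_def abs_mult[symmetric] by (rule sum_abs)
  also have "\<dots> \<le> (\<Sum>k\<in>UNIV. C ^ j * \<bar>A k h\<bar>)"
    by (intro sum_mono mult_right_mono) (simp_all add: Suc C_def)
  also have "\<dots> \<le> C ^ j * C"
    unfolding sum_distrib_left[symmetric] using \<open>C \<ge> 0\<close>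
    by (intro mult_left_mono) (auto simp: C_def intro!: sum_mono member_le_sum)
  finally show ?case by (simp add: C_def mult.commute)
qed

lemma mat_exp_sums:
  fixes A :: "'g::finite \<Rightarrow> 'g \<Rightarrow> real"
  shows "(\<lambda>j. mat_pow A j g h / fact j) sums mat_exp A g h"
proof -
  define C where "C = (\<Sum>k\<in>UNIV. \<Sum>l\<in>UNIV. \<bar>A k l\<bar>)"
  have "summable (\<lambda>j. inverse (fact j) * C ^ j)" by (rule summable_exp)
  then have "summable (\<lambda>j. mat_pow A j g h / fact j)"
  proof (rule summable_comparison_test')
    show "norm (mat_pow A j g h / fact j) \<le> inverse (fact j) * C ^ j" for j
      using mat_pow_abs_le[of A j g h] unfolding C_def
      by (simp add: abs_mult divide_inverse mult.commute mult_left_mono)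
  qed
  then show ?thesis unfolding mat_exp_def by (rule summable_sums)
qed

context
  fixes K :: nat and n :: "nat \<Rightarrow> nat" and phi :: "'g::{finite,ab_group_add} \<Rightarrow> nat \<Rightarrow> int"
  assumes decomp: "cyclic_decomp K n phi"
begin

lemma gchar_eigenvector_mat_pow_Qmat:
  "(\<Sum>b\<in>UNIV. gchar K n phi g b * of_real (mat_pow (Qmat psi) j a b))
     = fourier K n phi psi g ^ j * gchar K n phi g a"
proof (induction j arbitrary: a)
  case 0
  have "(\<Sum>b\<in>UNIV. gchar K n phi g b * of_real (if a = b then 1 else 0))
      = (\<Sum>b\<in>UNIV. if a = b then gchar K n phi g b else 0)"
    by (intro sum.cong) auto
  then show ?case by simp
next
  case (Suc j)
  let ?M = "mat_pow (Qmat psi) j" and ?X = "gchar K n phi g"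
  have row: "(\<Sum>b\<in>UNIV. ?X b * of_real (Qmat psi k b)) = fourier K n phi psi g * ?X k" for k
  proof -
    have "(\<Sum>b\<in>UNIV. ?X b * of_real (Qmat psi k b))
        = (\<Sum>b\<in>UNIV. ?X (b + k) * of_real (Qmat psi k (b + k)))"
      by (rule sum_UNIV_add_shift[symmetric])
    then show ?thesis
      by (simp add: Qmat_def gchar_add_right[OF decomp] fourier_def sum_distrib_left mult_ac)
  qed
  have "(\<Sum>b\<in>UNIV. ?X b * of_real (mat_pow (Qmat psi) (Suc j) a b))
      = (\<Sum>b\<in>UNIV. \<Sum>k\<in>UNIV. of_real (?M a k) * (?X b * of_real (Qmat psi k b)))"
    by (simp add: mat_mult_def sum_distrib_left mult_ac)
  also have "\<dots> = (\<Sum>k\<in>UNIV. of_real (?M a k) * (\<Sum>b\<in>UNIV. ?X b * of_real (Qmat psi k b)))"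
    by (subst sum.swap) (simp add: sum_distrib_left)
  also have "\<dots> = fourier K n phi psi g * (\<Sum>k\<in>UNIV. ?X k * of_real (?M a k))"
    unfolding row by (simp add: sum_distrib_left mult_ac)
  finally show ?case by (simp add: Suc.IH)
qed

lemma fourier_fvec_eq_exp:
  "fourier K n phi (fvec psi) g = exp (fourier K n phi psi g)"
proof -
  let ?X = "gchar K n phi g" and ?c = "fourier K n phi psi g"
  have "(\<lambda>j. \<Sum>b\<in>UNIV. ?X b * of_real (mat_pow (Qmat psi) j 0 b / fact j))
      sums (\<Sum>b\<in>UNIV. ?X b * of_real (fvec psi b))"
  proof (rule sums_sum)
    fix b
    have "(\<lambda>j. of_real (mat_pow (Qmat psi) j 0 b / fact j)) sums (of_real (fvec psi b) :: complex)"
      unfolding sums_of_real_iff fvec_def Pmat_def by (rule mat_exp_sums)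
    then show "(\<lambda>j. ?X b * of_real (mat_pow (Qmat psi) j 0 b / fact j))
        sums (?X b * of_real (fvec psi b))"
      by (rule sums_mult)
  qed
  moreover have "(\<Sum>b\<in>UNIV. ?X b * of_real (mat_pow (Qmat psi) j 0 b / fact j))
      = ?c ^ j /\<^sub>R fact j" for j
    using gchar_eigenvector_mat_pow_Qmat[of g psi j 0]
    by (simp add: gchar_zero_right[OF decomp] scaleR_conv_of_real divide_inverse mult_ac
        flip: sum_distrib_left)
  ultimately have "(\<lambda>j. ?c ^ j /\<^sub>R fact j) sums (\<Sum>b\<in>UNIV. ?X b * of_real (fvec psi b))"
    by simp
  then show ?thesis unfolding fourier_def using exp_converges sums_unique2 by blast
qed

lemma fourier_zero: "fourier K n phi psi 0 = of_real (\<Sum>g\<in>UNIV. psi g)"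
  by (simp add: fourier_def gchar_zero_left[OF decomp])

lemma fourier_uminus:
  assumes "\<forall>g. psi g = psi (- g)"
  shows "fourier K n phi psi (- g) = fourier K n phi psi g"
proof -
  have "fourier K n phi psi (- g) = (\<Sum>t\<in>UNIV. gchar K n phi g (- t) * of_real (psi (- t)))"
    unfolding fourier_def gchar_uminus_left[OF decomp] using assms by metis
  also have "\<dots> = fourier K n phi psi g"
    unfolding fourier_def by (rule sum_UNIV_uminus)
  finally show ?thesis .
qed

lemma fourier_fvec_zero:
  assumes "(\<Sum>g\<in>UNIV. psi g) = 0"
  shows "fourier K n phi (fvec psi) 0 = 1"
  unfolding fourier_fvec_eq_exp using assms by (simp add: fourier_zero)

lemma fourier_fvec_uminus:
  assumes "\<forall>g. psi g = psi (- g)"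
  shows "fourier K n phi (fvec psi) (- g) = fourier K n phi (fvec psi) g"
  unfolding fourier_fvec_eq_exp fourier_uminus[OF assms] ..

end

section \<open>Rooted trees\<close>

lemma adj_commute: "adj D a b = adj D b a"
  unfolding adj_def by auto

lemma tpath_ends_in_set: "tpath D x y xs \<Longrightarrow> x \<in> set xs \<and> y \<in> set xs"
  unfolding tpath_def by auto

lemma tpath_same_ends:
  assumes "tpath D x x xs"
  shows "set xs = {x}"
proof -
  obtain ys where xs: "xs = x # ys"
    using assms unfolding tpath_def by (cases xs) auto
  have "ys = []"
  proof (rule ccontr)
    assume "ys \<noteq> []"
    then have "last ys = x" "last ys \<in> set ys" using assms unfolding tpath_def xs by auto
    then show False using assms unfolding tpath_def xs by auto
  qed
  then show ?thesis using xs by simp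
qed

locale rooted_tree =
  fixes V :: "'v set" and D :: "('v \<times> 'v) set" and r :: 'v
  assumes tree_directed_from: "tree_directed_from V D r"
begin

lemma finite_V: "finite V"
  using tree_directed_from unfolding tree_directed_from_def by auto

lemma edges_subset: "D \<subseteq> V \<times> V"
  using tree_directed_from unfolding tree_directed_from_def by auto

lemma finite_D: "finite D"
  using finite_subset[OF edges_subset] finite_V by blast

lemma root_in_V: "r \<in> V"
  using tree_directed_from unfolding tree_directed_from_def by auto

lemma no_edge_into_root: "(u, r) \<notin> D"
  using tree_directed_from unfolding tree_directed_from_def by auto

lemma reachable_from_root: "x \<in> V \<Longrightarrow> (r, x) \<in> D\<^sup>*"
  using tree_directed_from unfolding tree_directed_from_def by auto

lemma parent_unique:
  assumes "(u, v) \<in> D" and "(w, v) \<in> D"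
  shows "u = w"
proof -
  have "v \<in> V" "v \<noteq> r" using assms edges_subset no_edge_into_root by auto
  then have "\<exists>!u. (u, v) \<in> D"
    using tree_directed_from unfolding tree_directed_from_def by auto
  then show ?thesis using assms by auto
qed

lemma rtrancl_parent:
  assumes "(a, x) \<in> D\<^sup>*" and "(w, x) \<in> D" and "a \<noteq> x"
  shows "(a, w) \<in> D\<^sup>*"
  using assms(1)
proof (cases rule: rtranclE)
  case (step y)
  then show ?thesis using parent_unique[OF _ assms(2)] by blast
qed (use assms in simp)

lemma acyclic_D: "acyclic D"
  unfolding acyclic_def
proof
  fix x
  have "(x, x) \<notin> D\<^sup>+" if "(r, x) \<in> D\<^sup>*"
    using that
  proof (induction rule: rtrancl_induct)
    case base
    then show ?case using no_edge_into_root by (auto dest: tranclD2)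
  next
    case (step y x)
    show ?case
    proof
      assume "(x, x) \<in> D\<^sup>+"
      then obtain w where "(x, w) \<in> D\<^sup>*" "(w, x) \<in> D" by (blast dest: tranclD2)
      then have "(y, y) \<in> D\<^sup>+"
        using parent_unique[OF step(2)] by (metis rtrancl_into_trancl2)
      then show False using step.IH by simp
    qed
  qed
  moreover have "(r, x) \<in> D\<^sup>*" if "(x, x) \<in> D\<^sup>+"
    using that edges_subset reachable_from_root by (auto dest!: tranclD)
  ultimately show "(x, x) \<notin> D\<^sup>+" by blast
qed

lemma edge_not_reversed: "(u, v) \<in> D \<Longrightarrow> (v, u) \<notin> D\<^sup>*"
  using acyclic_D unfolding acyclic_def by (meson rtrancl_into_trancl1)

definition root_path_edges :: "'v \<Rightarrow> ('v \<times> 'v) set" where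
  "root_path_edges x = {d \<in> D. (snd d, x) \<in> D\<^sup>*}"

lemma root_path_edges_root: "root_path_edges r = {}"
  unfolding root_path_edges_def using no_edge_into_root
  by (auto elim: rtranclE)

lemma root_path_edges_edge:
  assumes "(u, v) \<in> D"
  shows "root_path_edges v = insert (u, v) (root_path_edges u)"
    and "(u, v) \<notin> root_path_edges u"
proof -
  have "d \<in> insert (u, v) (root_path_edges u)" if "d \<in> D" "(snd d, v) \<in> D\<^sup>*" for d
  proof (cases "snd d = v")
    case True
    then show ?thesis using that assms parent_unique[of "fst d" v u] by (cases d) auto
  next
    case False
    then show ?thesis
      using that rtrancl_parent[OF that(2) assms] unfolding root_path_edges_def by auto
  qed
  then show "root_path_edges v = insert (u, v) (root_path_edges u)"
    using assms unfolding root_path_edges_def by (auto intro: rtrancl_into_rtrancl)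
  show "(u, v) \<notin> root_path_edges u"
    using edge_not_reversed[OF assms] unfolding root_path_edges_def by simp
qed

lemma finite_root_path_edges: "finite (root_path_edges x)"
  using finite_D unfolding root_path_edges_def by simp

lemma sum_root_path_edges:
  fixes \<sigma> :: "'v \<Rightarrow> 'g::ab_group_add"
  assumes "\<sigma> r = 0" and "x \<in> V"
  shows "(\<Sum>d\<in>root_path_edges x. \<sigma> (snd d) - \<sigma> (fst d)) = \<sigma> x"
  using reachable_from_root[OF assms(2)]
proof (induction rule: rtrancl_induct)
  case base
  then show ?case using assms(1) by (simp add: root_path_edges_root)
next
  case (step y x)
  then show ?case using root_path_edges_edge[OF step(2)] finite_root_path_edges by simp
qed

abbreviation splits :: "'v \<times> 'v \<Rightarrow> 'v \<Rightarrow> 'v \<Rightarrow> bool" where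
  "splits d x y \<equiv> ((snd d, x) \<in> D\<^sup>*) \<noteq> ((snd d, y) \<in> D\<^sup>*)"

lemma adj_leaving_subtree:
  assumes "(u, v) \<in> D" and "adj D a b" and "(v, a) \<in> D\<^sup>*" and "(v, b) \<notin> D\<^sup>*"
  shows "a = v \<and> b = u"
proof -
  have "(b, a) \<in> D"
    using assms(2-4) unfolding adj_def by (auto intro: rtrancl_into_rtrancl)
  moreover have "a = v"
    using rtrancl_parent[OF assms(3) \<open>(b, a) \<in> D\<close>] assms(4) by blast
  ultimately show ?thesis using parent_unique[OF assms(1)] by blast
qed

lemma edge_eq_if_splits:
  assumes "(u, v) \<in> D" and "e \<in> D" and "e = (a, b) \<or> e = (b, a)"
    and "(v, a) \<in> D\<^sup>*" and "(v, b) \<notin> D\<^sup>*"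
  shows "e = (u, v)"
proof -
  have "a = v" "b = u"
    using adj_leaving_subtree[OF assms(1) _ assms(4,5)] assms(2,3) unfolding adj_def by auto
  then show ?thesis using assms(1-3) edge_not_reversed by auto
qed

text \<open>A walk can leave the subtree below an edge only through that edge.\<close>
lemma walk_through_splitting_edge:
  assumes "d \<in> D" and "successively (adj D) xs"
    and "a \<in> set xs" and "b \<in> set xs" and "splits d a b"
  shows "fst d \<in> set xs \<and> snd d \<in> set xs"
  using assms(2-5)
proof (induction xs arbitrary: a b rule: induct_list012)
  case (3 x y zs)
  show ?case
  proof (cases "splits d x y")
    case True
    then have "{x, y} = {fst d, snd d}"
      using adj_leaving_subtree[of "fst d" "snd d" x y] adj_leaving_subtree[of "fst d" "snd d" y x]
        assms(1) "3.prems"(1)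
      by (cases d) (auto simp: adj_commute)
    then show ?thesis by auto
  next
    case False
    define a' where "a' = (if a = x then y else a)"
    define b' where "b' = (if b = x then y else b)"
    have "a' \<in> set (y # zs)" "b' \<in> set (y # zs)" "splits d a' b'"
      using "3.prems"(2-4) False unfolding a'_def b'_def by auto
    then show ?thesis using "3.IH"(2) "3.prems"(1) by auto
  qed
qed auto

lemma tpath_through_splitting_edge:
  assumes "d \<in> D" and "tpath D x y xs" and "splits d x y"
  shows "fst d \<in> set xs \<and> snd d \<in> set xs"
proof -
  have "successively (adj D) xs" "x \<in> set xs" "y \<in> set xs"
    using assms(2) unfolding tpath_def successively_conv_nth by auto
  then show ?thesis using walk_through_splitting_edge[OF assms(1)] assms(3) by blast
qed

text \<open>A path that changed sides would cross the edge both before and after the vertex where it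
  changes sides; as the path is simple, the edge would then be a loop.\<close>
lemma tpath_same_side:
  assumes "d \<in> D" and "tpath D x y xs" and "\<not> splits d x y" and "w \<in> set xs"
  shows "\<not> splits d x w"
proof
  assume split: "splits d x w"
  obtain ys zs where xs: "xs = ys @ w # zs" using split_list[OF assms(4)] by blast
  have walks: "successively (adj D) (ys @ [w])" "successively (adj D) (w # zs)"
    using assms(2) unfolding tpath_def successively_conv_nth[symmetric] xs
    by (auto simp: successively_append_iff)
  have "x \<in> set (ys @ [w])" "y \<in> set (w # zs)"
    using assms(2) unfolding tpath_def xs by (cases ys; auto)+
  moreover have "splits d w y" using split assms(3) by blast
  ultimately have "fst d \<in> set (ys @ [w]) \<and> snd d \<in> set (ys @ [w])"
    "fst d \<in> set (w # zs) \<and> snd d \<in> set (w # zs)"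
    using walk_through_splitting_edge[OF assms(1) walks(1), of x w]
      walk_through_splitting_edge[OF assms(1) walks(2), of w y] split by auto
  moreover have "set (ys @ [w]) \<inter> set (w # zs) = {w}"
    using assms(2) unfolding tpath_def xs by auto
  ultimately have "fst d = snd d" by (metis IntI singletonD)
  then show False using assms(1) edge_not_reversed[of "fst d" "snd d"] by (cases d) auto
qed

section \<open>The formula of Hendy and Evans-Speed\<close>

definition labelings :: "('v \<Rightarrow> 'g::zero) set" where
  "labelings = {\<sigma>. (\<forall>x. x \<notin> V \<longrightarrow> \<sigma> x = 0) \<and> \<sigma> r = 0}"

definition leaves_below :: "'v \<Rightarrow> 'v set" where
  "leaves_below v = {x \<in> leaves V D. (v, x) \<in> D\<^sup>*}"

lemma finite_leaves: "finite (leaves V D)"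
  by (rule finite_subset[OF _ finite_V]) (auto simp: leaves_def)

lemma finite_leaves_below: "finite (leaves_below v)"
  by (rule finite_subset[OF _ finite_leaves]) (auto simp: leaves_below_def)

lemma finite_labelings: "finite (labelings :: ('v \<Rightarrow> 'g::{finite,zero}) set)"
proof -
  have "labelings \<subseteq> {\<sigma> :: 'v \<Rightarrow> 'g. \<forall>x. (x \<in> V \<longrightarrow> \<sigma> x \<in> UNIV) \<and> (x \<notin> V \<longrightarrow> \<sigma> x = 0)}"
    unfolding labelings_def by auto
  then show ?thesis using finite_subset finite_set_of_finite_funs[OF finite_V finite_UNIV] by blast
qed

lemma qfour_eq_sum_labelings:
  fixes psi :: "'v \<times> 'v \<Rightarrow> 'g::{finite,ab_group_add} \<Rightarrow> real"
  shows "qfour K n phi V D r psi g = (\<Sum>\<sigma>\<in>labelings.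
     (\<Prod>x\<in>leaves V D. gchar K n phi (g x) (\<sigma> x)) *
     of_real (\<Prod>d\<in>D. Pmat (psi d) (\<sigma> (fst d)) (\<sigma> (snd d))))"
proof -
  let ?L = "leaves V D"
  define C where "C \<sigma> = (\<Prod>x\<in>?L. gchar K n phi (g x) (\<sigma> x))" for \<sigma>
  define W where "W \<sigma> = (\<Prod>d\<in>D. Pmat (psi d) (\<sigma> (fst d)) (\<sigma> (snd d)))" for \<sigma>
  define restr where "restr \<sigma> = (\<lambda>x. if x \<in> ?L then \<sigma> x else 0)" for \<sigma> :: "'v \<Rightarrow> 'g"
  have fibre: "{\<sigma> \<in> labelings. restr \<sigma> = h} =
      {\<sigma>. (\<forall>x. x \<notin> V \<longrightarrow> \<sigma> x = 0) \<and> \<sigma> r = 0 \<and> (\<forall>x\<in>?L. \<sigma> x = h x)}"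
    if "h \<in> leaf_cfgs ?L" for h
    using that unfolding labelings_def restr_def leaf_cfgs_def by (auto simp: fun_eq_iff)
  have "(\<Prod>x\<in>?L. gchar K n phi (g x) (h x)) * of_real (pprob V D r psi h)
      = (\<Sum>\<sigma>\<in>{\<sigma> \<in> labelings. restr \<sigma> = h}. C \<sigma> * of_real (W \<sigma>))"
    if "h \<in> leaf_cfgs ?L" for h
    unfolding pprob_def fibre[OF that, symmetric] W_def of_real_sum sum_distrib_left
    by (intro sum.cong refl) (auto simp: C_def restr_def)
  then have "qfour K n phi V D r psi g
      = (\<Sum>h\<in>leaf_cfgs ?L. \<Sum>\<sigma>\<in>{\<sigma> \<in> labelings. restr \<sigma> = h}. C \<sigma> * of_real (W \<sigma>))"
    unfolding qfour_def by (intro sum.cong refl)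
  also have "\<dots> = (\<Sum>\<sigma>\<in>labelings. C \<sigma> * of_real (W \<sigma>))"
  proof (rule sum.group[OF finite_labelings])
    show "finite (leaf_cfgs ?L :: ('v \<Rightarrow> 'g) set)"
      using finite_set_of_finite_funs[OF finite_leaves finite_UNIV, of 0]
      unfolding leaf_cfgs_def by simp
    show "restr ` labelings \<subseteq> leaf_cfgs ?L"
      unfolding restr_def leaf_cfgs_def by auto
  qed
  finally show ?thesis unfolding C_def W_def .
qed

lemma bij_betw_edge_increments:
  "bij_betw (\<lambda>\<sigma>. restrict (\<lambda>d. \<sigma> (snd d) - \<sigma> (fst d)) D) labelings
     (D \<rightarrow>\<^sub>E (UNIV :: 'g::ab_group_add set))"
proof -
  define incr where "incr \<sigma> = restrict (\<lambda>d. \<sigma> (snd d) - \<sigma> (fst d)) D" for \<sigma> :: "'v \<Rightarrow> 'g"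
  define lab where "lab \<tau> x = (if x \<in> V then \<Sum>d\<in>root_path_edges x. \<tau> d else 0)"
    for \<tau> :: "'v \<times> 'v \<Rightarrow> 'g" and x
  have "lab (incr \<sigma>) = \<sigma>" if "\<sigma> \<in> labelings" for \<sigma>
  proof
    fix x
    show "lab (incr \<sigma>) x = \<sigma> x"
    proof (cases "x \<in> V")
      case True
      have "lab (incr \<sigma>) x = (\<Sum>d\<in>root_path_edges x. \<sigma> (snd d) - \<sigma> (fst d))"
        using True by (auto simp: lab_def incr_def root_path_edges_def intro!: sum.cong)
      also have "\<dots> = \<sigma> x"
        using that True sum_root_path_edges[of \<sigma> x] by (simp add: labelings_def)
      finally show ?thesis .
    qed (use that in \<open>simp add: lab_def labelings_def\<close>)
  qed
  moreover have "incr (lab \<tau>) = \<tau>" if "\<tau> \<in> D \<rightarrow>\<^sub>E UNIV" for \<tau>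
  proof
    fix d
    show "incr (lab \<tau>) d = \<tau> d"
    proof (cases "d \<in> D")
      case True
      then obtain u v where d: "d = (u, v)" and uv: "(u, v) \<in> D" by (cases d) auto
      then have "u \<in> V" "v \<in> V" using edges_subset by auto
      then have "incr (lab \<tau>) d
          = (\<Sum>d\<in>insert (u, v) (root_path_edges u). \<tau> d) - (\<Sum>d\<in>root_path_edges u. \<tau> d)"
        using uv unfolding d incr_def lab_def by (simp add: root_path_edges_edge(1)[OF uv])
      also have "\<dots> = \<tau> d"
        using root_path_edges_edge(2)[OF uv] finite_root_path_edges unfolding d by simp
      finally show ?thesis .
    qed (simp add: incr_def PiE_arb[OF that])
  qed
  moreover have "lab ` (D \<rightarrow>\<^sub>E UNIV) \<subseteq> labelings"
    using root_in_V by (auto simp: labelings_def lab_def root_path_edges_root)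
  ultimately have "bij_betw incr labelings (D \<rightarrow>\<^sub>E UNIV)"
    by (intro bij_betw_byWitness[where f' = lab]) (auto simp: incr_def)
  then show ?thesis unfolding incr_def .
qed

context
  fixes K :: nat and n :: "nat \<Rightarrow> nat" and phi :: "'g::{finite,ab_group_add} \<Rightarrow> nat \<Rightarrow> int"
  assumes decomp: "cyclic_decomp K n phi"
begin

lemma prod_gchar_leaves:
  assumes "\<sigma> \<in> labelings"
  shows "(\<Prod>x\<in>leaves V D. gchar K n phi (g x) (\<sigma> x))
    = (\<Prod>d\<in>D. gchar K n phi (\<Sum>x\<in>leaves_below (snd d). g x) (\<sigma> (snd d) - \<sigma> (fst d)))"
proof -
  have "gchar K n phi (g x) (\<sigma> x)
      = (\<Prod>d\<in>{d \<in> D. (snd d, x) \<in> D\<^sup>*}. gchar K n phi (g x) (\<sigma> (snd d) - \<sigma> (fst d)))"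
    if "x \<in> leaves V D" for x
  proof -
    have "\<sigma> x = (\<Sum>d\<in>root_path_edges x. \<sigma> (snd d) - \<sigma> (fst d))"
      using assms that sum_root_path_edges[of \<sigma> x] by (simp add: labelings_def leaves_def)
    then show ?thesis unfolding root_path_edges_def by (simp only: gchar_sum_right[OF decomp])
  qed
  then have "(\<Prod>x\<in>leaves V D. gchar K n phi (g x) (\<sigma> x))
      = (\<Prod>x\<in>leaves V D. \<Prod>d\<in>{d \<in> D. (snd d, x) \<in> D\<^sup>*}. gchar K n phi (g x) (\<sigma> (snd d) - \<sigma> (fst d)))"
    by (rule prod.cong[OF refl])
  also have "\<dots> = (\<Prod>d\<in>D. \<Prod>x\<in>leaves_below (snd d). gchar K n phi (g x) (\<sigma> (snd d) - \<sigma> (fst d)))"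
    unfolding leaves_below_def by (rule prod.swap_restrict[OF finite_leaves finite_D])
  finally show ?thesis by (simp only: gchar_sum_left[OF decomp])
qed

theorem qfour_eq_prod_fourier:
  "qfour K n phi V D r psi g
     = (\<Prod>d\<in>D. fourier K n phi (fvec (psi d)) (\<Sum>x\<in>leaves_below (snd d). g x))"
proof -
  define H where "H d t = gchar K n phi (\<Sum>x\<in>leaves_below (snd d). g x) t * of_real (fvec (psi d) t)"
    for d t
  have "qfour K n phi V D r psi g = (\<Sum>\<sigma>\<in>labelings. \<Prod>d\<in>D. H d (\<sigma> (snd d) - \<sigma> (fst d)))"
    unfolding qfour_eq_sum_labelings
    by (intro sum.cong refl)
      (simp only: prod_gchar_leaves H_def Pmat_eq_fvec_diff prod.distrib of_real_prod)
  also have "\<dots> = (\<Sum>\<sigma>\<in>labelings. \<Prod>d\<in>D. H d (restrict (\<lambda>d. \<sigma> (snd d) - \<sigma> (fst d)) D d))"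
    by (intro sum.cong prod.cong refl) simp
  also have "\<dots> = (\<Sum>\<tau>\<in>D \<rightarrow>\<^sub>E UNIV. \<Prod>d\<in>D. H d (\<tau> d))"
    by (rule sum.reindex_bij_betw[OF bij_betw_edge_increments])
  also have "\<dots> = (\<Prod>d\<in>D. \<Sum>t\<in>UNIV. H d t)"
    by (rule prod_sum_PiE[symmetric]) (simp_all add: finite_D)
  finally show ?thesis unfolding H_def fourier_def .
qed

lemma qfour_nonzero: "qfour K n phi V D r psi g \<noteq> 0"
  by (simp add: qfour_eq_prod_fourier fourier_fvec_eq_exp[OF decomp] finite_D)

end

section \<open>Quartets around an internal edge\<close>

lemma edge_splits_ends:
  assumes "e \<in> D" and "e = (a, b) \<or> e = (b, a)"
  shows "splits e a b"
  using assms edge_not_reversed[of "fst e" "snd e"] by (cases e) auto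

lemma tpath_side_of_edge:
  assumes "e \<in> D" and "e = (a, b) \<or> e = (b, a)"
    and "tpath D x y xs" and "a \<in> set xs" and "b \<notin> set xs" and "w \<in> set xs"
  shows "\<not> splits e a w"
proof -
  have "\<not> splits e x y"
  proof
    assume "splits e x y"
    then have "fst e \<in> set xs \<and> snd e \<in> set xs"
      by (rule tpath_through_splitting_edge[OF assms(1,3)])
    then show False using assms(2,5) by auto
  qed
  then show ?thesis using tpath_same_side[OF assms(1,3)] assms(4,6) by blast
qed

context
  fixes e :: "'v \<times> 'v" and \<nu> \<nu>' i j i' j' :: 'v and xs ys :: "'v list"
  assumes edge: "e \<in> D" "e = (\<nu>, \<nu>') \<or> e = (\<nu>', \<nu>)"
    and path1: "tpath D i j xs" "\<nu> \<in> set xs" "\<nu>' \<notin> set xs"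
    and path2: "tpath D i' j' ys" "\<nu>' \<in> set ys" "\<nu> \<notin> set ys"
begin

lemma paths_on_opposite_sides:
  assumes "w \<in> set xs" and "w' \<in> set ys"
  shows "splits e w w'"
proof -
  have "e = (\<nu>', \<nu>) \<or> e = (\<nu>, \<nu>')" using edge(2) by blast
  then have "\<not> splits e \<nu> w" "\<not> splits e \<nu>' w'"
    using tpath_side_of_edge[OF edge path1 assms(1)] tpath_side_of_edge[OF edge(1) _ path2 assms(2)]
    by auto
  then show ?thesis using edge_splits_ends[OF edge] by blast
qed

lemma no_edge_splits_both_pairs:
  assumes "d \<in> D"
  shows "\<not> (splits d i j \<and> splits d i' j')"
proof
  assume "splits d i j \<and> splits d i' j'"
  then have "snd d \<in> set xs" "snd d \<in> set ys"
    using tpath_through_splitting_edge[OF assms] path1(1) path2(1) by auto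
  then show False using paths_on_opposite_sides by blast
qed

lemma splits_pairs_iff_eq_edge:
  assumes "d \<in> D"
  shows "(\<not> splits d i j \<and> \<not> splits d i' j' \<and> splits d i i') \<longleftrightarrow> d = e"
proof
  assume split: "\<not> splits d i j \<and> \<not> splits d i' j' \<and> splits d i i'"
  then have "\<not> splits d i \<nu>" "\<not> splits d i' \<nu>'"
    using tpath_same_side[OF assms path1(1)] tpath_same_side[OF assms path2(1)] path1(2) path2(2)
    by auto
  then have "splits d \<nu> \<nu>'" using split by blast
  then show "d = e"
    using edge_eq_if_splits[of "fst d" "snd d" e \<nu> \<nu>'] edge_eq_if_splits[of "fst d" "snd d" e \<nu>' \<nu>]
      assms edge by (cases "(snd d, \<nu>) \<in> D\<^sup>*") auto
next
  assume "d = e"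
  then show "\<not> splits d i j \<and> \<not> splits d i' j' \<and> splits d i i'"
    using paths_on_opposite_sides tpath_ends_in_set[OF path1(1)] tpath_ends_in_set[OF path2(1)]
    by blast
qed

end

end

lemma sum_zcfg:
  fixes a b c d :: "'g::ab_group_add"
  assumes "finite S" and "distinct [i, j, i', j']"
  shows "(\<Sum>x\<in>S. zcfg i j i' j' a b c d x) = (if i \<in> S then a else 0) + (if j \<in> S then b else 0)
     + (if i' \<in> S then c else 0) + (if j' \<in> S then d else 0)"
proof -
  have "zcfg i j i' j' a b c d = (\<lambda>x. (if x = i then a else 0) + (if x = j then b else 0)
     + (if x = i' then c else 0) + (if x = j' then d else 0))"
    using assms(2) unfolding zcfg_def by (auto simp: fun_eq_iff)
  then show ?thesis using assms(1) by (simp add: sum.distrib)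
qed

lemma even_quartet_identity:
  fixes f :: "'g::ab_group_add \<Rightarrow> 'a::comm_monoid_mult"
  assumes "f 0 = 1" and "\<And>x. f (- x) = f x" and "\<not> (I \<noteq> J \<and> I' \<noteq> J')"
  shows "f ((if I then h else 0) + (if I' then - h else 0))
      * f ((if J then - h else 0) + (if J' then h else 0))
    = (if I = J \<and> I' = J' \<and> I \<noteq> I' then f h ^ 2 else 1)
      * (f ((if I then h else 0) + (if J then - h else 0))
        * f ((if I' then - h else 0) + (if J' then h else 0)))"
  using assms by (cases I; cases J; cases I'; cases J') (simp_all add: power2_eq_square)

context rooted_tree
begin

lemma quartet_factor:
  fixes f :: "'g::ab_group_add \<Rightarrow> 'a::comm_monoid_mult"
  assumes leaves: "{i, j, i', j'} \<subseteq> leaves V D" and "distinct [i, j, i', j']"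
    and "f 0 = 1" and "\<And>x. f (- x) = f x" and "\<not> (splits d i j \<and> splits d i' j')"
  shows "f (\<Sum>x\<in>leaves_below (snd d). zcfg i j i' j' h 0 (- h) 0 x)
      * f (\<Sum>x\<in>leaves_below (snd d). zcfg i j i' j' 0 (- h) 0 h x)
    = (if \<not> splits d i j \<and> \<not> splits d i' j' \<and> splits d i i' then f h ^ 2 else 1)
      * (f (\<Sum>x\<in>leaves_below (snd d). zcfg i j i' j' h (- h) 0 0 x)
        * f (\<Sum>x\<in>leaves_below (snd d). zcfg i j i' j' 0 0 (- h) h x))"
proof -
  let ?I = "(snd d, i) \<in> D\<^sup>*" and ?J = "(snd d, j) \<in> D\<^sup>*"
    and ?I' = "(snd d, i') \<in> D\<^sup>*" and ?J' = "(snd d, j') \<in> D\<^sup>*"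
  have "x \<in> leaves_below (snd d) \<longleftrightarrow> (snd d, x) \<in> D\<^sup>*" if "x \<in> {i, j, i', j'}" for x
    using that leaves by (auto simp: leaves_below_def)
  then have below: "(\<Sum>x\<in>leaves_below (snd d). zcfg i j i' j' a b c c' x)
      = (if ?I then a else 0) + (if ?J then b else 0)
        + (if ?I' then c else 0) + (if ?J' then c' else 0)"
    for a b c c' :: 'g
    by (simp only: sum_zcfg[OF finite_leaves_below assms(2)] insert_iff simp_thms)
  have "(\<Sum>x\<in>leaves_below (snd d). zcfg i j i' j' h 0 (- h) 0 x)
      = (if ?I then h else 0) + (if ?I' then - h else 0)"
    "(\<Sum>x\<in>leaves_below (snd d). zcfg i j i' j' 0 (- h) 0 h x)
      = (if ?J then - h else 0) + (if ?J' then h else 0)"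
    "(\<Sum>x\<in>leaves_below (snd d). zcfg i j i' j' h (- h) 0 0 x)
      = (if ?I then h else 0) + (if ?J then - h else 0)"
    "(\<Sum>x\<in>leaves_below (snd d). zcfg i j i' j' 0 0 (- h) h x)
      = (if ?I' then - h else 0) + (if ?J' then h else 0)"
    unfolding below by simp_all
  then show ?thesis using even_quartet_identity[of f, OF assms(3,4,5)] by simp
qed

lemma qfour_quartet_product:
  fixes psi :: "'v \<times> 'v \<Rightarrow> 'g::{finite,ab_group_add} \<Rightarrow> real"
  assumes decomp: "cyclic_decomp K n phi"
    and sum_zero: "\<forall>d\<in>D. (\<Sum>g\<in>UNIV. psi d g) = 0" and even: "\<forall>d\<in>D. \<forall>g. psi d g = psi d (- g)"
    and "e \<in> D" and leaves: "{i, j, i', j'} \<subseteq> leaves V D" and "distinct [i, j, i', j']"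
    and no_double_split: "\<forall>d\<in>D. \<not> (splits d i j \<and> splits d i' j')"
    and only_e_splits: "\<forall>d\<in>D. (\<not> splits d i j \<and> \<not> splits d i' j' \<and> splits d i i') \<longleftrightarrow> d = e"
  shows "qfour K n phi V D r psi (zcfg i j i' j' h 0 (- h) 0)
      * qfour K n phi V D r psi (zcfg i j i' j' 0 (- h) 0 h)
    = fourier K n phi (fvec (psi e)) h ^ 2
      * (qfour K n phi V D r psi (zcfg i j i' j' h (- h) 0 0)
        * qfour K n phi V D r psi (zcfg i j i' j' 0 0 (- h) h))"
proof -
  define E where "E d = fourier K n phi (fvec (psi d))" for d
  have E_zero: "E d 0 = 1" if "d \<in> D" for d
    unfolding E_def using fourier_fvec_zero[OF decomp] sum_zero that by blast
  have E_even: "E d (- x) = E d x" if "d \<in> D" for d x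
    unfolding E_def using fourier_fvec_uminus[OF decomp] even that by blast
  have factor: "E d (\<Sum>x\<in>leaves_below (snd d). zcfg i j i' j' h 0 (- h) 0 x)
      * E d (\<Sum>x\<in>leaves_below (snd d). zcfg i j i' j' 0 (- h) 0 h x)
    = (if d = e then E e h ^ 2 else 1)
      * (E d (\<Sum>x\<in>leaves_below (snd d). zcfg i j i' j' h (- h) 0 0 x)
        * E d (\<Sum>x\<in>leaves_below (snd d). zcfg i j i' j' 0 0 (- h) h x))" if "d \<in> D" for d
  proof -
    have cond: "(\<not> splits d i j \<and> \<not> splits d i' j' \<and> splits d i i') \<longleftrightarrow> d = e"
      using only_e_splits that by blast
    have "\<not> (splits d i j \<and> splits d i' j')" using no_double_split that by blast
    from quartet_factor[OF leaves assms(6) E_zero[OF that] E_even[OF that] this, where h = h,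
        unfolded cond]
    show ?thesis by (cases "d = e") simp_all
  qed
  have "(\<Prod>d\<in>D. if d = e then E e h ^ 2 else 1) = E e h ^ 2"
    using finite_D \<open>e \<in> D\<close> by simp
  then show ?thesis
    unfolding qfour_eq_prod_fourier[OF decomp] E_def[symmetric] prod.distrib[symmetric]
    by (simp only: factor cong: prod.cong) (simp only: prod.distrib)
qed

end

theorem mainTheorem6:
  fixes K :: nat and n :: "nat \<Rightarrow> nat" and phi :: "'g::{finite,ab_group_add} \<Rightarrow> nat \<Rightarrow> int"
    and V :: "'v set" and D :: "('v \<times> 'v) set" and r :: 'v
    and psi :: "'v \<times> 'v \<Rightarrow> 'g \<Rightarrow> real"
    and e :: "'v \<times> 'v" and \<nu> \<nu>' i j i' j' :: 'v
  assumes "cyclic_decomp K n phi"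
    and "tree_directed_from V D r"
    and "r \<in> leaves V D"
    and "\<forall>d\<in>D. (\<Sum>g\<in>UNIV. psi d g) = 0"
    and "\<forall>d\<in>D. \<forall>g. psi d g = psi d (- g)"
    and "internal_edge V D e"
    and "e = (\<nu>, \<nu>') \<or> e = (\<nu>', \<nu>)"
    and "i \<in> leaves V D" and "j \<in> leaves V D" and "i' \<in> leaves V D" and "j' \<in> leaves V D"
    and "on_path D i j \<nu>" and "\<not> on_path D i j \<nu>'"
    and "on_path D i' j' \<nu>'" and "\<not> on_path D i' j' \<nu>"
  shows "\<forall>h::'g.
     qfour K n phi V D r psi (zcfg i j i' j' h (- h) 0 0) *
       qfour K n phi V D r psi (zcfg i j i' j' 0 0 (- h) h) \<noteq> 0 \<and>
     (fourier K n phi (fvec (psi e)) h)\<^sup>2 =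
       qfour K n phi V D r psi (zcfg i j i' j' h 0 (- h) 0) *
       qfour K n phi V D r psi (zcfg i j i' j' 0 (- h) 0 h) /
       (qfour K n phi V D r psi (zcfg i j i' j' h (- h) 0 0) *
        qfour K n phi V D r psi (zcfg i j i' j' 0 0 (- h) h))"
proof -
  interpret rooted_tree V D r by (rule rooted_tree.intro) (fact assms(2))
  obtain xs ys where path1: "tpath D i j xs" "\<nu> \<in> set xs" "\<nu>' \<notin> set xs"
    and path2: "tpath D i' j' ys" "\<nu>' \<in> set ys" "\<nu> \<notin> set ys"
    using assms(12-15) unfolding on_path_def by blast
  have "e \<in> D" and internal: "\<nu> \<notin> leaves V D" "\<nu>' \<notin> leaves V D"
    using assms(6,7) unfolding internal_edge_def by auto
  have no_double_split: "\<forall>d\<in>D. \<not> (splits d i j \<and> splits d i' j')"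
    using no_edge_splits_both_pairs[OF \<open>e \<in> D\<close> assms(7) path1 path2] by blast
  have only_e_splits: "\<forall>d\<in>D. (\<not> splits d i j \<and> \<not> splits d i' j' \<and> splits d i i') \<longleftrightarrow> d = e"
    using splits_pairs_iff_eq_edge[OF \<open>e \<in> D\<close> assms(7) path1 path2] by blast
  have "i \<noteq> j" "i' \<noteq> j'"
    using tpath_same_ends[of D i xs] tpath_same_ends[of D i' ys] path1(1,2) path2(1,2)
      internal assms(8,10)
    by auto
  with only_e_splits \<open>e \<in> D\<close> have "distinct [i, j, i', j']" by auto
  moreover have "{i, j, i', j'} \<subseteq> leaves V D" using assms(8-11) by simp
  ultimately show ?thesis
    using qfour_quartet_product[OF assms(1,4,5) \<open>e \<in> D\<close> _ _ no_double_split only_e_splits]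
      qfour_nonzero[OF assms(1)]
    by (simp add: eq_divide_eq)
qed

end
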